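(* If some set maximizing $\widehat{re}$ over nonempty subsets of $\mathbb{S}$ has cardinality $k$, then $\{1,2,\dots,k\}$ also maximizes $\widehat{re}$ over nonempty subsets of $\mathbb{S}$.
   Context: Sellers $\mathbb{S}=\{1,\dots,n\}$ with product qualities $\theta_1\ge\theta_2\ge\dots\ge\theta_n\ge0$. $W$ is the Lambert W function on $[0,\infty)$ ($W(x)e^{W(x)}=x$) and $w_i=W(e^{\theta_i-1})$, so $w_1\ge\dots\ge w_n>0$. For nonempty $S\subseteq\mathbb{S}$, the Cournot-equilibrium revenue when $S$ is displayed is $\widehat{re}(S)=\frac{\sum_{i\in S}(w_i^2+w_i)}{1+\sum_{i\in S}w_i}$. *)

theory Defs
  imports "HOL-Analysis.Analysis"
begin

definition lambertW :: "real \<Rightarrow> real" where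
  "lambertW x = (THE w. 0 \<le> w \<and> w * exp w = x)"

definition wq :: "(nat \<Rightarrow> real) \<Rightarrow> nat \<Rightarrow> real" where
  "wq \<theta> i = lambertW (exp (\<theta> i - 1))"

text \<open>Cournot-equilibrium revenue when the set S of sellers is displayed.\<close>
definition re_hat :: "(nat \<Rightarrow> real) \<Rightarrow> nat set \<Rightarrow> real" where
  "re_hat \<theta> S = (\<Sum>i\<in>S. (wq \<theta> i)^2 + wq \<theta> i) / (1 + (\<Sum>i\<in>S. wq \<theta> i))"

definition is_opt :: "(nat \<Rightarrow> real) \<Rightarrow> nat \<Rightarrow> nat set \<Rightarrow> bool" where
  "is_opt \<theta> n S \<longleftrightarrow> S \<subseteq> {1..n} \<and> S \<noteq> {} \<and>
     (\<forall>T. T \<subseteq> {1..n} \<and> T \<noteq> {} \<longrightarrow> re_hat \<theta> T \<le> re_hat \<theta> S)"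

end

theory Submission
  imports Defs
begin

text \<open>
  Let \<open>R\<close> be the optimal revenue. For positive weights, \<open>R \<le> re(T)\<close> iff
  \<open>R \<le> \<Sum>i\<in>T. w\<^sub>i (w\<^sub>i + 1 - R)\<close>, with equality for an optimal set \<open>S\<close>.
  Dropping \<open>i\<close> from \<open>S\<close> cannot raise the revenue, which forces \<open>R \<le> w\<^sub>i + 1\<close>
  for every \<open>i \<in> S\<close>; on that range the summand is increasing in \<open>w\<^sub>i\<close>.
  Exchanging the members of \<open>S\<close> outside \<open>{1..k}\<close> for the missing members of
  \<open>{1..k}\<close>, which have larger weights, therefore keeps the surplus at least \<open>R\<close>.
\<close>

lemma mult_exp_strict_mono: "0 \<le> u \<Longrightarrow> u < v \<Longrightarrow> u * exp u < v * exp (v::real)"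
  by (rule le_less_trans[of _ "u * exp v"]) (simp_all add: mult_left_mono)

lemma lambertW_eq:
  assumes "0 \<le> w"
  shows "lambertW (w * exp w) = w"
  unfolding lambertW_def
proof (rule the_equality)
  fix v assume "0 \<le> v \<and> v * exp v = w * exp w"
  with assms show "v = w"
    using mult_exp_strict_mono[of v w] mult_exp_strict_mono[of w v]
    by (cases v w rule: linorder_cases) auto
qed (use assms in simp)

lemma lambertW_inverse:
  assumes "0 < x"
  shows "0 < lambertW x" "lambertW x * exp (lambertW x) = x"
proof -
  obtain w where w: "0 \<le> w" "w * exp w = x"
    using IVT[of "\<lambda>w. w * exp w" 0 x x] assms by (auto intro!: continuous_intros)
  then have "lambertW x = w" using lambertW_eq by blast
  then show "lambertW x * exp (lambertW x) = x" "0 < lambertW x"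
    using w assms by (auto simp: order.order_iff_strict)
qed

lemma lambertW_mono:
  assumes "0 < x" "x \<le> y"
  shows "lambertW x \<le> lambertW y"
proof (rule ccontr)
  assume "\<not> ?thesis"
  then have "lambertW y * exp (lambertW y) < lambertW x * exp (lambertW x)"
    using mult_exp_strict_mono lambertW_inverse(1)[of y] assms by auto
  then show False using lambertW_inverse(2)[of x] lambertW_inverse(2)[of y] assms by auto
qed

lemma wq_pos: "0 < wq \<theta> i"
  unfolding wq_def using lambertW_inverse by auto

lemma wq_mono: "\<theta> j \<le> \<theta> i \<Longrightarrow> wq \<theta> j \<le> wq \<theta> i"
  unfolding wq_def by (rule lambertW_mono) auto

definition cournot_revenue :: "('a \<Rightarrow> real) \<Rightarrow> 'a set \<Rightarrow> real" where
  "cournot_revenue w S = (\<Sum>i\<in>S. (w i)^2 + w i) / (1 + sum w S)"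

lemma re_hat_eq_cournot_revenue: "re_hat \<theta> = cournot_revenue (wq \<theta>)"
  unfolding re_hat_def cournot_revenue_def by auto

lemma cournot_revenue_nonneg: "(\<And>i. 0 \<le> w i) \<Longrightarrow> 0 \<le> cournot_revenue w S"
  unfolding cournot_revenue_def by (simp add: sum_nonneg)

lemma cournot_revenue_linearized:
  assumes "\<And>i. 0 \<le> w i"
  shows "(\<Sum>i\<in>S. w i * (w i + 1 - R)) = (1 + sum w S) * (cournot_revenue w S - R) + R"
proof -
  define A W where "A = (\<Sum>i\<in>S. (w i)^2 + w i)" and "W = sum w S"
  have "0 < 1 + W" using assms by (simp add: W_def add_pos_nonneg sum_nonneg)
  then have revenue: "(1 + W) * (A / (1 + W) - R) + R = A - R * W"
    by (simp add: field_simps)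
  have surplus: "(\<Sum>i\<in>S. w i * (w i + 1 - R)) = A - R * W"
    by (simp add: A_def W_def sum_subtractf sum_distrib_left power2_eq_square algebra_simps)
  show ?thesis
    unfolding cournot_revenue_def A_def[symmetric] W_def[symmetric] by (simp only: revenue surplus)
qed

lemma cournot_revenue_ge_iff:
  assumes "\<And>i. 0 \<le> w i"
  shows "R \<le> cournot_revenue w S \<longleftrightarrow> R \<le> (\<Sum>i\<in>S. w i * (w i + 1 - R))"
proof -
  have "0 < 1 + sum w S" using assms by (simp add: add_pos_nonneg sum_nonneg)
  then show ?thesis
    unfolding cournot_revenue_linearized[OF assms] by (simp add: zero_le_mult_iff)
qed

lemma cournot_revenue_le_iff:
  assumes "\<And>i. 0 \<le> w i"
  shows "cournot_revenue w S \<le> R \<longleftrightarrow> (\<Sum>i\<in>S. w i * (w i + 1 - R)) \<le> R"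
proof -
  have "0 < 1 + sum w S" using assms by (simp add: add_pos_nonneg sum_nonneg)
  then show ?thesis
    unfolding cournot_revenue_linearized[OF assms] by (simp add: mult_le_0_iff)
qed

lemma cournot_revenue_le_weight_plus_one:
  assumes pos: "\<And>i. 0 < w i" and "finite S" "i \<in> S"
    and remove: "S - {i} \<noteq> {} \<Longrightarrow> cournot_revenue w (S - {i}) \<le> cournot_revenue w S"
  shows "cournot_revenue w S \<le> w i + 1"
proof -
  define R where "R = cournot_revenue w S"
  have nonneg: "\<And>i. 0 \<le> w i" using pos less_imp_le by blast
  have "R \<le> (\<Sum>j\<in>S. w j * (w j + 1 - R))"
    using cournot_revenue_ge_iff[of w, OF nonneg] R_def by blast
  also have "\<dots> = (\<Sum>j\<in>S - {i}. w j * (w j + 1 - R)) + w i * (w i + 1 - R)"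
    using assms(2,3) by (simp add: sum_diff1)
  also have "(\<Sum>j\<in>S - {i}. w j * (w j + 1 - R)) \<le> R"
  proof (cases "S - {i} = {}")
    case True
    have "0 \<le> R" using cournot_revenue_nonneg[of w, OF nonneg] R_def by simp
    then show ?thesis by (simp only: True sum.empty)
  next
    case False
    then show ?thesis using remove cournot_revenue_le_iff[of w, OF nonneg] R_def by blast
  qed
  finally have "0 \<le> w i * (w i + 1 - R)" by simp
  then show ?thesis using pos[of i] R_def by (simp add: zero_le_mult_iff)
qed

lemma surplus_term_mono:
  fixes a b R :: real
  assumes "0 \<le> a" "a \<le> b" "R \<le> a + 1"
  shows "a * (a + 1 - R) \<le> b * (b + 1 - R)"
  using assms by (intro mult_mono) auto

lemma sum_le_sum_if_dominated:
  assumes "finite A" "finite B" "card A = card B" "\<And>a b. a \<in> A \<Longrightarrow> b \<in> B \<Longrightarrow> f a \<le> f b"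
  shows "sum f A \<le> (sum f B :: 'b :: ordered_comm_monoid_add)"
proof -
  obtain h where h: "bij_betw h A B" using finite_same_card_bij assms(1-3) by blast
  have "sum f A \<le> sum (f \<circ> h) A" using assms(4) bij_betwE[OF h] by (intro sum_mono) auto
  also have "\<dots> = sum f B" using sum.reindex_bij_betw[OF h] by simp
  finally show ?thesis .
qed

lemma sum_le_sum_by_exchange:
  assumes "finite A" "finite B" "card A = card B"
    and "\<And>a b. a \<in> A - B \<Longrightarrow> b \<in> B - A \<Longrightarrow> f a \<le> f b"
  shows "sum f A \<le> (sum f B :: 'b :: ordered_comm_monoid_add)"
proof -
  have "card (A - B) = card (B - A)"
    using assms(1-3) by (simp add: card_Diff_subset_Int Int_commute)
  then have "sum f (A - B) \<le> sum f (B - A)"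
    using assms by (intro sum_le_sum_if_dominated) auto
  then show ?thesis
    using sum.Int_Diff[OF assms(1), of f B] sum.Int_Diff[OF assms(2), of f A]
    by (simp add: Int_commute add_left_mono)
qed

theorem lemma8:
  fixes n :: nat and \<theta> :: "nat \<Rightarrow> real" and S :: "nat set" and k :: nat
  assumes "n \<ge> 1"
    and "\<And>i j. 1 \<le> i \<Longrightarrow> i \<le> j \<Longrightarrow> j \<le> n \<Longrightarrow> \<theta> j \<le> \<theta> i"
    and "\<And>i. 1 \<le> i \<Longrightarrow> i \<le> n \<Longrightarrow> 0 \<le> \<theta> i"
    and "is_opt \<theta> n S"
    and "card S = k"
  shows "is_opt \<theta> n {1..k}"
proof -
  define w where "w = wq \<theta>"
  define R where "R = cournot_revenue w S"
  have pos: "\<And>i. 0 < w i" and nonneg: "\<And>i. 0 \<le> w i"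
    unfolding w_def using wq_pos less_imp_le by blast+
  have S: "S \<subseteq> {1..n}" "S \<noteq> {}" "finite S"
    and opt: "\<And>T. T \<subseteq> {1..n} \<Longrightarrow> T \<noteq> {} \<Longrightarrow> cournot_revenue w T \<le> R"
    using assms(4) finite_subset unfolding is_opt_def R_def w_def re_hat_eq_cournot_revenue by auto
  have k: "1 \<le> k" "k \<le> n"
    using assms(5) S card_mono[OF _ S(1)] by (auto simp: Suc_le_eq card_gt_0_iff)
  have member_bound: "R \<le> w i + 1" if "i \<in> S" for i
    unfolding R_def
  proof (rule cournot_revenue_le_weight_plus_one[OF pos S(3) that])
    show "cournot_revenue w (S - {i}) \<le> cournot_revenue w S" if "S - {i} \<noteq> {}"
      using opt[of "S - {i}"] S(1) that R_def by blast
  qed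
  have "R \<le> (\<Sum>i\<in>S. w i * (w i + 1 - R))"
    using cournot_revenue_ge_iff[of w, OF nonneg] R_def by blast
  also have "\<dots> \<le> (\<Sum>i\<in>{1..k}. w i * (w i + 1 - R))"
  proof (rule sum_le_sum_by_exchange)
    fix i j assume i: "i \<in> S - {1..k}" and j: "j \<in> {1..k} - S"
    then have "1 \<le> j" "j \<le> i" "i \<le> n" using S(1) by auto
    then have "w i \<le> w j" unfolding w_def using assms(2) wq_mono by blast
    moreover have "R \<le> w i + 1" using member_bound i by blast
    ultimately show "w i * (w i + 1 - R) \<le> w j * (w j + 1 - R)"
      using surplus_term_mono nonneg by blast
  qed (use S(3) assms(5) in auto)
  finally have "R \<le> cournot_revenue w {1..k}"
    using cournot_revenue_ge_iff[of w, OF nonneg] by blast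
  then show ?thesis
    unfolding is_opt_def re_hat_eq_cournot_revenue w_def[symmetric]
    using k opt by (meson atLeastAtMost_iff atLeastatMost_empty_iff order_trans subsetI)
qed

end
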